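(* Let $(x_j)_{j=1}^\infty$ be a Riesz basis for a real infinite dimensional Hilbert space $H$, and let $x\in H$. Then $(x_j)_{j=1}^\infty$ does stable phase retrieval near $x$ if and only if $\langle x,x_j\rangle=0$ for all but finitely many $j\in\mathbb N$.
   Context: The analysis operator of $(x_j)_{j=1}^\infty$ is $\Theta(x)=(\langle x,x_j\rangle)_{j=1}^\infty\in\ell_2$ and $|\Theta x|=(|\langle x,x_j\rangle|)_j$. For $x,y$ with $x\neq\pm y$, set $\Psi(x,y)=\||\Theta x|-|\Theta y|\|/\min_{\lambda=\pm1}\|x-\lambda y\|$. For $C>0$, the family does $C$-stable phase retrieval near $x$ if $\liminf_{y\to x,\ y\neq\pm x} C\,\Psi(x,y)\ge1$, and does stable phase retrieval near $x$ if this holds for some $C>0$. *)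

theory Defs
  imports "HOL-Analysis.Analysis"
begin

text \<open>Real Hilbert spaces are modelled by types of class real_inner + complete_space.\<close>

definition infinite_dimensional :: "'a::real_vector itself \<Rightarrow> bool" where
  "infinite_dimensional _ \<longleftrightarrow> \<not> (\<exists>S::'a set. finite S \<and> span S = UNIV)"

definition orthonormal_basis :: "(nat \<Rightarrow> 'a::real_inner) \<Rightarrow> bool" where
  "orthonormal_basis e \<longleftrightarrow>
     (\<forall>i j. e i \<bullet> e j = (if i = j then 1 else 0)) \<and> closure (span (range e)) = UNIV"

definition riesz_basis :: "(nat \<Rightarrow> 'a::{real_inner,complete_space}) \<Rightarrow> bool" where
  "riesz_basis xs \<longleftrightarrow>
     (\<exists>(e::nat \<Rightarrow> 'a) (T::'a \<Rightarrow> 'a). orthonormal_basis e \<and> bounded_linear T \<and> bij T \<and> (\<forall>j. T (e j) = xs j))"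

definition abs_analysis_dist :: "(nat \<Rightarrow> 'a::real_inner) \<Rightarrow> 'a \<Rightarrow> 'a \<Rightarrow> real" where
  "abs_analysis_dist xs x y = sqrt (\<Sum>j. (\<bar>x \<bullet> xs j\<bar> - \<bar>y \<bullet> xs j\<bar>)\<^sup>2)"

definition Psi :: "(nat \<Rightarrow> 'a::real_inner) \<Rightarrow> 'a \<Rightarrow> 'a \<Rightarrow> real" where
  "Psi xs x y = abs_analysis_dist xs x y / min (norm (x - y)) (norm (x + y))"

definition C_stable_pr_near :: "real \<Rightarrow> (nat \<Rightarrow> 'a::real_inner) \<Rightarrow> 'a \<Rightarrow> bool" where
  "C_stable_pr_near C xs x \<longleftrightarrow>
     Liminf (at x within - {x, - x}) (\<lambda>y. ereal (C * Psi xs x y)) \<ge> 1"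

definition stable_pr_near :: "(nat \<Rightarrow> 'a::real_inner) \<Rightarrow> 'a \<Rightarrow> bool" where
  "stable_pr_near xs x \<longleftrightarrow> (\<exists>C>0. C_stable_pr_near C xs x)"

end

theory Submission
  imports Defs
begin

text \<open>By the bounded
  inverse theorem a Riesz basis shares two features of an orthonormal basis: the lower frame
  bound \<open>\<parallel>y\<parallel> \<le> K \<parallel>\<Theta> y\<parallel>\<close>, and a bounded biorthogonal sequence \<open>(z\<^sub>j)\<close>.
  If \<open>x\<close> has finite support, then for \<open>y\<close> near \<open>x\<close> the nonzero coefficients of \<open>x\<close> and \<open>y\<close>
  have the same signs, so \<open>\<parallel>|\<Theta> x| - |\<Theta> y|\<parallel> = \<parallel>\<Theta> (x - y)\<parallel> \<ge> \<parallel>x - y\<parallel> / K\<close>.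
  If \<open>x\<close> has infinite support, flipping the sign of one small coefficient,
  \<open>y = x - 2 \<langle>x, x\<^sub>j\<rangle> z\<^sub>j\<close>, gives points arbitrarily close to \<open>x\<close>, different from \<open>\<plusminus>x\<close>,
  with \<open>|\<Theta> y| = |\<Theta> x|\<close>.\<close>

section \<open>Orthonormal expansions\<close>

definition orthonormal_seq :: "(nat \<Rightarrow> 'a::real_inner) \<Rightarrow> bool" where
  "orthonormal_seq e \<longleftrightarrow> (\<forall>i j. e i \<bullet> e j = (if i = j then 1 else 0))"

lemma orthonormal_seqD: "orthonormal_seq e \<Longrightarrow> e i \<bullet> e j = (if i = j then 1 else 0)"
  unfolding orthonormal_seq_def by blast

lemma orthonormal_basis_iff:
  "orthonormal_basis e \<longleftrightarrow> orthonormal_seq e \<and> closure (span (range e)) = UNIV"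
  unfolding orthonormal_basis_def orthonormal_seq_def ..

lemma inner_sum_orthonormal:
  assumes "orthonormal_seq e" "finite I"
  shows "(\<Sum>i\<in>I. c i *\<^sub>R e i) \<bullet> e j = (if j \<in> I then c j else 0)"
proof -
  have "(\<Sum>i\<in>I. c i *\<^sub>R e i) \<bullet> e j = (\<Sum>i\<in>I. if i = j then c i else 0)"
    unfolding inner_sum_left by (intro sum.cong) (auto simp: orthonormal_seqD[OF assms(1)])
  with assms(2) show ?thesis
    by (simp add: sum.delta')
qed

lemma norm_sum_orthonormal_squared:
  assumes "orthonormal_seq e" "finite I"
  shows "(norm (\<Sum>i\<in>I. c i *\<^sub>R e i))\<^sup>2 = (\<Sum>i\<in>I. (c i)\<^sup>2)"
proof -
  have "(norm (\<Sum>i\<in>I. c i *\<^sub>R e i))\<^sup>2 = (\<Sum>j\<in>I. c j * ((\<Sum>i\<in>I. c i *\<^sub>R e i) \<bullet> e j))"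
    by (simp only: power2_norm_eq_inner inner_sum_right inner_scaleR_right)
  also have "\<dots> = (\<Sum>j\<in>I. (c j)\<^sup>2)"
    by (intro sum.cong) (auto simp: inner_sum_orthonormal[OF assms] power2_eq_square)
  finally show ?thesis .
qed

definition partial_expansion :: "(nat \<Rightarrow> 'a::real_inner) \<Rightarrow> nat \<Rightarrow> 'a \<Rightarrow> 'a" where
  "partial_expansion e n z = (\<Sum>i<n. (z \<bullet> e i) *\<^sub>R e i)"

lemma partial_expansion_in_span: "partial_expansion e n z \<in> span (e ` {..<n})"
  unfolding partial_expansion_def by (intro span_sum span_scale span_base) auto

lemma partial_expansion_residual_orthogonal:
  assumes "orthonormal_seq e" "w \<in> span (e ` {..<n})"
  shows "orthogonal (z - partial_expansion e n z) w"
proof (rule orthogonal_to_span[OF assms(2)], unfold orthogonal_def)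
  fix v assume "v \<in> e ` {..<n}"
  then obtain j where "j < n" "v = e j" by blast
  then show "(z - partial_expansion e n z) \<bullet> v = 0"
    using inner_sum_orthonormal[OF assms(1), of "{..<n}" "\<lambda>i. z \<bullet> e i" j]
    by (simp add: partial_expansion_def inner_diff_left)
qed

lemma partial_expansion_best_approximation:
  assumes "orthonormal_seq e" "w \<in> span (e ` {..<n})"
  shows "norm (z - partial_expansion e n z) \<le> norm (z - w)"
proof -
  let ?p = "partial_expansion e n z"
  have "?p - w \<in> span (e ` {..<n})"
    using partial_expansion_in_span assms(2) by (rule span_diff)
  then have "orthogonal (z - ?p) (?p - w)"
    by (rule partial_expansion_residual_orthogonal[OF assms(1)])
  then have "(norm (z - w))\<^sup>2 = (norm (z - ?p))\<^sup>2 + (norm (?p - w))\<^sup>2"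
    using norm_add_Pythagorean[of "z - ?p" "?p - w"] by simp
  then have "(norm (z - ?p))\<^sup>2 \<le> (norm (z - w))\<^sup>2"
    by simp
  then show ?thesis
    by (simp add: power2_le_iff_abs_le)
qed

lemma span_range_subset_initial_segment:
  fixes e :: "nat \<Rightarrow> 'a::real_vector"
  assumes "w \<in> span (range e)"
  obtains N where "w \<in> span (e ` {..<N})"
proof -
  obtain t r where t: "w = (\<Sum>a\<in>t. r a *\<^sub>R a)" "finite t" "t \<subseteq> range e"
    using assms unfolding span_explicit by blast
  then obtain I where I: "finite I" "t = e ` I"
    using finite_subset_image[of t e UNIV] by blast
  obtain N where "I \<subseteq> {..<N}"
    using finite_nat_bounded[OF I(1)] by blast
  with I have "t \<subseteq> e ` {..<N}"
    by auto
  then have "w \<in> span (e ` {..<N})"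
    unfolding t(1) by (intro span_sum span_scale span_base) auto
  then show thesis ..
qed

lemma partial_expansion_tendsto:
  assumes "orthonormal_basis e"
  shows "(\<lambda>n. partial_expansion e n z) \<longlonglongrightarrow> z"
proof (rule LIMSEQ_I)
  fix r :: real assume "r > 0"
  have e: "orthonormal_seq e" and "z \<in> closure (span (range e))"
    using assms by (auto simp: orthonormal_basis_iff)
  then obtain w where w: "w \<in> span (range e)" "dist w z < r"
    using \<open>r > 0\<close> closure_approachable by blast
  obtain N where N: "w \<in> span (e ` {..<N})"
    using span_range_subset_initial_segment[OF w(1)] by blast
  have "norm (partial_expansion e n z - z) < r" if "n \<ge> N" for n
  proof -
    have "e ` {..<N} \<subseteq> e ` {..<n}"
      using \<open>n \<ge> N\<close> by auto
    then have "w \<in> span (e ` {..<n})"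
      using N span_mono by blast
    then have "norm (z - partial_expansion e n z) \<le> norm (z - w)"
      by (rule partial_expansion_best_approximation[OF e])
    with w(2) show ?thesis
      by (simp add: dist_norm norm_minus_commute)
  qed
  then show "\<exists>N. \<forall>n\<ge>N. norm (partial_expansion e n z - z) < r"
    by blast
qed

lemma orthonormal_expansion:
  assumes "orthonormal_basis e"
  shows "(\<lambda>i. (z \<bullet> e i) *\<^sub>R e i) sums z"
  using partial_expansion_tendsto[OF assms] unfolding sums_def partial_expansion_def .

lemma parseval:
  assumes "orthonormal_basis e"
  shows "(\<lambda>i. (z \<bullet> e i)\<^sup>2) sums (norm z)\<^sup>2"
proof -
  have e: "orthonormal_seq e"
    using assms by (simp add: orthonormal_basis_iff)
  have "(norm (partial_expansion e n z))\<^sup>2 = (\<Sum>i<n. (z \<bullet> e i)\<^sup>2)" for n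
    unfolding partial_expansion_def by (simp add: norm_sum_orthonormal_squared[OF e])
  moreover have "(\<lambda>n. (norm (partial_expansion e n z))\<^sup>2) \<longlonglongrightarrow> (norm z)\<^sup>2"
    by (intro tendsto_intros partial_expansion_tendsto[OF assms])
  ultimately show ?thesis
    unfolding sums_def by simp
qed

section \<open>Series in Hilbert spaces and adjoints\<close>

text \<open>The library states these criteria for class \<open>banach\<close>, which a type variable of sort
  \<open>{real_normed_vector, complete_space}\<close> does not belong to.\<close>
lemma summable_Cauchy_complete:
  fixes f :: "nat \<Rightarrow> 'a::{real_normed_vector,complete_space}"
  assumes "\<And>\<epsilon>. \<epsilon> > 0 \<Longrightarrow> \<exists>N. \<forall>m\<ge>N. \<forall>n. norm (sum f {m..<n}) < \<epsilon>"
  shows "summable f"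
  unfolding summable_iff_convergent Cauchy_convergent_iff[symmetric] Cauchy_iff
proof (intro allI impI)
  fix \<epsilon> :: real
  assume "\<epsilon> > 0"
  then obtain N where N: "\<And>m n. m \<ge> N \<Longrightarrow> norm (sum f {m..<n}) < \<epsilon>"
    using assms by blast
  have "norm (sum f {..<m} - sum f {..<n}) < \<epsilon>" if "m \<ge> N" "n \<ge> N" for m n
  proof (cases m n rule: le_cases)
    case le
    then have "sum f {..<n} - sum f {..<m} = sum f {m..<n}"
      by (metis atLeast0LessThan sum_diff_nat_ivl zero_le)
    with N[OF \<open>m \<ge> N\<close>] show ?thesis
      by (metis norm_minus_commute)
  next
    case ge
    then have "sum f {..<m} - sum f {..<n} = sum f {n..<m}"
      by (metis atLeast0LessThan sum_diff_nat_ivl zero_le)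
    with N[OF \<open>n \<ge> N\<close>] show ?thesis
      by simp
  qed
  then show "\<exists>M. \<forall>m\<ge>M. \<forall>n\<ge>M. norm (sum f {..<m} - sum f {..<n}) < \<epsilon>"
    by blast
qed

lemma summable_norm_cancel_complete:
  fixes f :: "nat \<Rightarrow> 'a::{real_normed_vector,complete_space}"
  assumes "summable (\<lambda>n. norm (f n))"
  shows "summable f"
proof (rule summable_Cauchy_complete)
  fix \<epsilon> :: real assume "\<epsilon> > 0"
  then obtain N where N: "\<forall>m\<ge>N. \<forall>n. norm (\<Sum>k = m..<n. norm (f k)) < \<epsilon>"
    using assms unfolding summable_Cauchy by blast
  have "norm (sum f {m..<n}) < \<epsilon>" if "m \<ge> N" for m n
  proof -
    have "norm (sum f {m..<n}) \<le> (\<Sum>k = m..<n. norm (f k))"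
      by (rule norm_sum)
    also have "\<dots> < \<epsilon>"
      using N \<open>m \<ge> N\<close> by (simp add: sum_nonneg)
    finally show ?thesis .
  qed
  then show "\<exists>N. \<forall>m\<ge>N. \<forall>n. norm (sum f {m..<n}) < \<epsilon>"
    by blast
qed

lemma summable_orthonormal_series:
  fixes e :: "nat \<Rightarrow> 'a::{real_inner,complete_space}"
  assumes "orthonormal_seq e" "summable (\<lambda>i. (c i)\<^sup>2)"
  shows "summable (\<lambda>i. c i *\<^sub>R e i)"
proof (rule summable_Cauchy_complete)
  fix \<epsilon> :: real assume "\<epsilon> > 0"
  then obtain N where N: "\<forall>m\<ge>N. \<forall>n. norm (\<Sum>i = m..<n. (c i)\<^sup>2) < \<epsilon>\<^sup>2"
    using assms(2) unfolding summable_Cauchy by (meson zero_less_power)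
  have "norm (\<Sum>i = m..<n. c i *\<^sub>R e i) < \<epsilon>" if "m \<ge> N" for m n
  proof (rule power2_less_imp_less)
    have "(norm (\<Sum>i = m..<n. c i *\<^sub>R e i))\<^sup>2 = (\<Sum>i = m..<n. (c i)\<^sup>2)"
      by (simp add: norm_sum_orthonormal_squared[OF assms(1)])
    also have "\<dots> < \<epsilon>\<^sup>2"
      using N \<open>m \<ge> N\<close> by (simp add: sum_nonneg)
    finally show "(norm (\<Sum>i = m..<n. c i *\<^sub>R e i))\<^sup>2 < \<epsilon>\<^sup>2" .
  qed (use \<open>\<epsilon> > 0\<close> in simp)
  then show "\<exists>N. \<forall>m\<ge>N. \<forall>n. norm (\<Sum>i = m..<n. c i *\<^sub>R e i) < \<epsilon>"
    by blast
qed

lemma inner_orthonormal_series: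
  fixes e :: "nat \<Rightarrow> 'a::{real_inner,complete_space}"
  assumes "orthonormal_seq e" "summable (\<lambda>i. (c i)\<^sup>2)"
  shows "(\<Sum>i. c i *\<^sub>R e i) \<bullet> e j = c j"
proof -
  have "(\<lambda>i. (c i *\<^sub>R e i) \<bullet> e j) sums ((\<Sum>i. c i *\<^sub>R e i) \<bullet> e j)"
    using summable_orthonormal_series[OF assms]
    by (intro bounded_linear.sums[OF bounded_linear_inner_left] summable_sums)
  moreover have "(\<lambda>i. (c i *\<^sub>R e i) \<bullet> e j) = (\<lambda>i. if i = j then c i else 0)"
    by (auto simp: orthonormal_seqD[OF assms(1)])
  ultimately show ?thesis
    using sums_single[of j c] sums_unique2 by metis
qed

text \<open>The partial sum \<open>u = \<Sum>i<n. (v \<bullet> L (e i)) e i\<close> satisfies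
  \<open>\<parallel>u\<parallel>\<^sup>2 = v \<bullet> L u \<le> K \<parallel>v\<parallel> \<parallel>u\<parallel>\<close>.\<close>
lemma sum_inner_image_orthonormal_le:
  fixes L :: "'a::real_inner \<Rightarrow> 'b::real_inner"
  assumes e: "orthonormal_seq e" and lin: "linear L"
    and K: "\<And>u. norm (L u) \<le> K * norm u"
  shows "(\<Sum>i<n. (v \<bullet> L (e i))\<^sup>2) \<le> (K * norm v)\<^sup>2"
proof -
  define u where "u = (\<Sum>i<n. (v \<bullet> L (e i)) *\<^sub>R e i)"
  have norm_u: "(norm u)\<^sup>2 = (\<Sum>i<n. (v \<bullet> L (e i))\<^sup>2)"
    unfolding u_def by (simp add: norm_sum_orthonormal_squared[OF e])
  also have "\<dots> = v \<bullet> L u"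
    unfolding u_def
    by (simp add: linear_sum[OF lin] linear_scale[OF lin] inner_sum_right power2_eq_square)
  also have "\<dots> \<le> norm v * (K * norm u)"
    using norm_cauchy_schwarz[of v "L u"] K[of u] by (meson mult_left_mono norm_ge_zero order_trans)
  finally have "norm u * norm u \<le> (K * norm v) * norm u"
    by (simp add: power2_eq_square algebra_simps)
  then have "norm u = 0 \<or> norm u \<le> K * norm v"
    by (cases "norm u = 0") (simp_all add: mult_le_cancel_right)
  then show ?thesis
    unfolding norm_u[symmetric] by (auto intro: power_mono)
qed

lemma bounded_adjoint_exists:
  fixes L :: "'a::{real_inner,complete_space} \<Rightarrow> 'b::real_inner" and e :: "nat \<Rightarrow> 'a"
  assumes e: "orthonormal_basis e" and L: "bounded_linear L"
    and K: "\<And>u. norm (L u) \<le> K * norm u"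
  obtains A where "\<And>v w. A v \<bullet> w = v \<bullet> L w" "\<And>v. norm (A v) \<le> K * norm v"
proof -
  have e': "orthonormal_seq e"
    using e by (simp add: orthonormal_basis_iff)
  have lin: "linear L"
    using L by (rule bounded_linear.linear)
  have "norm (L (e 0)) \<le> K"
    using K[of "e 0"] orthonormal_seqD[OF e', of 0 0] by (simp add: norm_eq_sqrt_inner)
  then have "K \<ge> 0"
    using norm_ge_zero order_trans by blast
  define c where "c v i = v \<bullet> L (e i)" for v i
  have partial_bound: "(\<Sum>i<n. (c v i)\<^sup>2) \<le> (K * norm v)\<^sup>2" for v n
    unfolding c_def by (rule sum_inner_image_orthonormal_le[OF e' lin K])
  have summable: "summable (\<lambda>i. (c v i)\<^sup>2)" for v
    by (rule summableI_nonneg_bounded[OF _ partial_bound]) simp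
  define A where "A v = (\<Sum>i. c v i *\<^sub>R e i)" for v
  have coeff: "A v \<bullet> e i = c v i" for v i
    unfolding A_def by (rule inner_orthonormal_series[OF e' summable])
  have "A v \<bullet> w = v \<bullet> L w" for v w
  proof -
    have expansion: "(\<lambda>i. (w \<bullet> e i) *\<^sub>R e i) sums w"
      by (rule orthonormal_expansion[OF e])
    have "(\<lambda>i. v \<bullet> L ((w \<bullet> e i) *\<^sub>R e i)) sums (v \<bullet> L w)"
      by (intro bounded_linear.sums[OF bounded_linear_inner_right] bounded_linear.sums[OF L expansion])
    moreover have "(\<lambda>i. A v \<bullet> ((w \<bullet> e i) *\<^sub>R e i)) sums (A v \<bullet> w)"
      by (rule bounded_linear.sums[OF bounded_linear_inner_right expansion])
    ultimately show ?thesis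
      by (simp add: linear_scale[OF lin] coeff c_def sums_unique2)
  qed
  moreover have "norm (A v) \<le> K * norm v" for v
  proof (rule power2_le_imp_le)
    have "(norm (A v))\<^sup>2 = (\<Sum>i. (c v i)\<^sup>2)"
      using parseval[OF e, of "A v"] by (simp add: coeff sums_iff)
    also have "\<dots> \<le> (K * norm v)\<^sup>2"
      by (rule suminf_le_const[OF summable partial_bound])
    finally show "(norm (A v))\<^sup>2 \<le> (K * norm v)\<^sup>2" .
    show "0 \<le> K * norm v"
      using \<open>K \<ge> 0\<close> by simp
  qed
  ultimately show thesis
    using that by blast
qed

section \<open>The bounded inverse theorem\<close>

lemma surj_closure_image_ball_interior_nonempty:
  fixes T :: "'a::real_normed_vector \<Rightarrow> 'b::{real_normed_vector,complete_space}"
  assumes "surj T"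
  obtains n :: nat where "interior (closure (T ` ball 0 (real n))) \<noteq> {}"
proof (rule ccontr)
  assume "\<not> thesis"
  then have empty: "interior (closure (T ` ball 0 (real n))) = {}" for n :: nat
    using that by blast
  let ?G = "range (\<lambda>n::nat. closure (T ` ball 0 (real n)))"
  have "euclidean interior_of \<Union>?G = {}"
  proof (rule Baire_category_alt)
    show "completely_metrizable_space (euclidean :: 'b topology) \<or>
        locally_compact_space (euclidean :: 'b topology) \<and> regular_space euclidean"
      using completely_metrizable_space_euclidean by blast
  qed (auto simp: euclidean_interior_of empty closed_closedin[symmetric])
  moreover have "\<Union>?G = UNIV"
  proof -
    have "w \<in> \<Union>?G" for w
    proof -
      obtain v where "w = T v"
        using assms by blast
      moreover obtain n :: nat where "norm v < real n"
        using reals_Archimedean2 by blast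
      ultimately have "w \<in> closure (T ` ball 0 (real n))"
        using closure_subset by fastforce
      then show ?thesis
        by blast
    qed
    then show ?thesis
      by blast
  qed
  ultimately show False
    by simp
qed

text \<open>If \<open>ball y \<rho>\<close> lies in the closure of \<open>T ` ball 0 n\<close>, then every \<open>w\<close> with
  \<open>\<parallel>w\<parallel> < \<rho> / (2n)\<close> is the difference quotient \<open>((y + 2n w) - y) / (2n)\<close> of two points
  that are approximately images of \<open>ball 0 n\<close>.\<close>
lemma approximate_preimage_unit_ball:
  fixes T :: "'a::real_normed_vector \<Rightarrow> 'b::{real_normed_vector,complete_space}"
  assumes lin: "linear T" and "surj T"
  obtains r where "r > 0"
    "\<And>w \<epsilon>. norm w < r \<Longrightarrow> \<epsilon> > 0 \<Longrightarrow> \<exists>u. norm u < 1 \<and> norm (w - T u) < \<epsilon>"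
proof -
  obtain n :: nat where "interior (closure (T ` ball 0 (real n))) \<noteq> {}"
    using surj_closure_image_ball_interior_nonempty[OF \<open>surj T\<close>] by blast
  then obtain y \<rho> where "\<rho> > 0" and ball: "ball y \<rho> \<subseteq> closure (T ` ball 0 (real n))"
    by (meson all_not_in_conv interior_subset open_contains_ball open_interior order_trans)
  then have "n > 0"
    using centre_in_ball[of y \<rho>] by (auto intro!: Nat.gr0I)
  define r where "r = \<rho> / (2 * real n)"
  have "\<exists>u. norm u < 1 \<and> norm (w - T u) < \<epsilon>" if "norm w < r" "\<epsilon> > 0" for w \<epsilon>
  proof -
    have "y + (2 * real n) *\<^sub>R w \<in> ball y \<rho>" "y \<in> ball y \<rho>"
      using \<open>norm w < r\<close> \<open>n > 0\<close> \<open>\<rho> > 0\<close> by (auto simp: r_def dist_norm field_simps)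
    then have "y + (2 * real n) *\<^sub>R w \<in> closure (T ` ball 0 (real n))"
      "y \<in> closure (T ` ball 0 (real n))"
      using ball by auto
    moreover have "\<epsilon> * real n > 0"
      using \<open>\<epsilon> > 0\<close> \<open>n > 0\<close> by simp
    moreover have "\<exists>u. norm u < real n \<and> norm (p - T u) < \<delta>"
      if "p \<in> closure (T ` ball 0 (real n))" "\<delta> > 0" for p \<delta>
      using that by (fastforce simp: closure_approachable dist_norm norm_minus_commute)
    ultimately obtain u1 u2 where u: "norm u1 < real n" "norm u2 < real n"
      and close: "norm (y + (2 * real n) *\<^sub>R w - T u1) < \<epsilon> * real n"
        "norm (y - T u2) < \<epsilon> * real n"
      by meson
    define u where "u = (1 / (2 * real n)) *\<^sub>R (u1 - u2)"
    have "norm (u1 - u2) < 2 * real n"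
      using u norm_triangle_ineq4[of u1 u2] by linarith
    then have "norm u < 1"
      using \<open>n > 0\<close> by (simp add: u_def divide_simps)
    moreover have "w - T u = (1 / (2 * real n)) *\<^sub>R
        ((y + (2 * real n) *\<^sub>R w - T u1) - (y - T u2))"
      using \<open>n > 0\<close> by (simp add: u_def linear_scale[OF lin] linear_diff[OF lin] algebra_simps)
    then have "norm (w - T u) < \<epsilon>"
      using close norm_triangle_ineq4[of "y + (2 * real n) *\<^sub>R w - T u1" "y - T u2"] \<open>n > 0\<close>
      by (simp add: divide_simps)
    ultimately show ?thesis
      by blast
  qed
  moreover have "r > 0"
    using \<open>\<rho> > 0\<close> \<open>n > 0\<close> by (simp add: r_def)
  ultimately show thesis
    using that by blast
qed

lemma approximate_preimage_bound:
  fixes T :: "'a::real_normed_vector \<Rightarrow> 'b::{real_normed_vector,complete_space}"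
  assumes lin: "linear T" and "surj T"
  obtains c where "c > 0" "\<And>w. \<exists>u. norm u \<le> c * norm w \<and> norm (w - T u) \<le> norm w / 2"
proof -
  obtain r where "r > 0" and r:
    "\<And>w \<epsilon>. norm w < r \<Longrightarrow> \<epsilon> > 0 \<Longrightarrow> \<exists>u. norm u < 1 \<and> norm (w - T u) < \<epsilon>"
    using approximate_preimage_unit_ball[OF assms] by blast
  have "\<exists>u. norm u \<le> (2 / r) * norm w \<and> norm (w - T u) \<le> norm w / 2" for w
  proof (cases "w = 0")
    case True
    then show ?thesis
      by (intro exI[of _ 0]) (simp add: linear_0[OF lin])
  next
    case False
    define s where "s = 2 * norm w / r"
    have "s > 0"
      using False \<open>r > 0\<close> by (simp add: s_def)
    have "norm ((1 / s) *\<^sub>R w) < r"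
      using False \<open>r > 0\<close> by (simp add: s_def)
    then obtain u where u: "norm u < 1" "norm ((1 / s) *\<^sub>R w - T u) < r / 4"
      using r[of "(1 / s) *\<^sub>R w" "r / 4"] \<open>r > 0\<close> by auto
    have "w - T (s *\<^sub>R u) = s *\<^sub>R ((1 / s) *\<^sub>R w - T u)"
      using \<open>s > 0\<close> by (simp add: linear_scale[OF lin] algebra_simps)
    then have "norm (w - T (s *\<^sub>R u)) = s * norm ((1 / s) *\<^sub>R w - T u)"
      using \<open>s > 0\<close> by simp
    also have "\<dots> \<le> s * (r / 4)"
      using u(2) \<open>s > 0\<close> by simp
    also have "\<dots> = norm w / 2"
      using \<open>r > 0\<close> by (simp add: s_def)
    finally have "norm (w - T (s *\<^sub>R u)) \<le> norm w / 2" .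
    moreover have "norm (s *\<^sub>R u) \<le> s"
      using u(1) \<open>s > 0\<close> by (simp add: mult_left_le)
    then have "norm (s *\<^sub>R u) \<le> (2 / r) * norm w"
      by (simp add: s_def)
    ultimately show ?thesis
      by blast
  qed
  moreover have "2 / r > 0"
    using \<open>r > 0\<close> by simp
  ultimately show thesis
    using that by blast
qed

lemma geometrically_dominated_series:
  fixes u :: "nat \<Rightarrow> 'a::{real_normed_vector,complete_space}"
  assumes u: "\<And>k. norm (u k) \<le> a * (1/2)^k"
  shows "u sums suminf u" "norm (suminf u) \<le> 2 * a"
proof -
  have geometric: "(\<lambda>k. a * (1/2::real)^k) sums (2 * a)"
    using sums_mult[OF geometric_sums[of "1/2::real"], of a] by (simp add: mult.commute)
  have "a \<ge> 0"
    using order_trans[OF norm_ge_zero u[of 0]] by simp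
  have "summable (\<lambda>k. norm (u k))"
    by (rule summable_comparison_test'[OF sums_summable[OF geometric]]) (use u in simp)
  then show "u sums suminf u"
    by (rule summable_sums[OF summable_norm_cancel_complete])
  then show "norm (suminf u) \<le> 2 * a"
  proof (rule LIMSEQ_le_const2[OF tendsto_norm[OF summable_LIMSEQ[OF sums_summable]]])
    have "norm (\<Sum>k<m. u k) \<le> (\<Sum>k<m. a * (1/2)^k)" for m
      by (rule order_trans[OF norm_sum sum_mono[OF u]])
    also have "(\<Sum>k<m. a * (1/2::real)^k) \<le> 2 * a" for m
      using sum_le_suminf[OF sums_summable[OF geometric], of "{..<m}"] \<open>a \<ge> 0\<close> geometric
      by (simp add: sums_iff)
    finally show "\<exists>N. \<forall>m\<ge>N. norm (\<Sum>k<m. u k) \<le> 2 * a"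
      by blast
  qed
qed

text \<open>Successive approximation: correcting the residual \<open>w - T (u\<^sub>0 + \<dots> + u\<^sub>k)\<close> at each step
  halves it, and the corrections \<open>u\<^sub>k\<close> form a geometrically convergent series.\<close>
lemma exact_preimage_from_approximate:
  fixes T :: "'a::{real_normed_vector,complete_space} \<Rightarrow> 'b::real_normed_vector"
  assumes T: "bounded_linear T" and "c \<ge> 0"
    and approx: "\<And>w. \<exists>u. norm u \<le> c * norm w \<and> norm (w - T u) \<le> norm w / 2"
  obtains u where "T u = w" "norm u \<le> 2 * c * norm w"
proof -
  have "\<exists>g. \<forall>w. norm (g w) \<le> c * norm w \<and> norm (w - T (g w)) \<le> norm w / 2"
    using approx by (intro choice) blast
  then obtain g where g: "\<And>w. norm (g w) \<le> c * norm w" "\<And>w. norm (w - T (g w)) \<le> norm w / 2"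
    by blast
  define res where "res = rec_nat w (\<lambda>_ v. v - T (g v))"
  have res_simps: "res 0 = w" "res (Suc k) = res k - T (g (res k))" for k
    by (simp_all add: res_def)
  define u where "u k = g (res k)" for k
  have norm_res: "norm (res k) \<le> norm w * (1/2)^k" for k
  proof (induction k)
    case (Suc k)
    then show ?case
      using g(2)[of "res k"] by (simp add: res_simps)
  qed (simp add: res_simps)
  have "norm (u k) \<le> c * norm w * (1/2)^k" for k
  proof -
    have "norm (u k) \<le> c * norm (res k)"
      unfolding u_def by (rule g(1))
    also have "\<dots> \<le> c * (norm w * (1/2)^k)"
      by (rule mult_left_mono[OF norm_res \<open>c \<ge> 0\<close>])
    finally show ?thesis
      by simp
  qed
  note series = geometrically_dominated_series[OF this]
  have telescope: "(\<Sum>k<m. T (u k)) = w - res m" for m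
    by (induction m) (simp_all add: res_simps u_def)
  have "(\<lambda>m. w - res m) \<longlonglongrightarrow> T (suminf u)"
    using bounded_linear.sums[OF T series(1)] by (simp add: sums_def telescope)
  moreover have "(\<lambda>k. norm w * (1/2::real)^k) \<longlonglongrightarrow> 0"
    by (intro tendsto_mult_right_zero LIMSEQ_realpow_zero) simp_all
  then have "res \<longlonglongrightarrow> 0"
    by (rule Lim_null_comparison[rotated]) (use norm_res in simp)
  then have "(\<lambda>m. w - res m) \<longlonglongrightarrow> w"
    using tendsto_diff[OF tendsto_const, of res 0 sequentially w] by simp
  ultimately have "T (suminf u) = w"
    by (rule LIMSEQ_unique)
  with series(2) show thesis
    using that by (simp add: mult.assoc)
qed

lemma bounded_linear_inv:
  fixes T :: "'a::{real_normed_vector,complete_space} \<Rightarrow> 'b::{real_normed_vector,complete_space}"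
  assumes T: "bounded_linear T" and "bij T"
  shows "bounded_linear (inv T)"
proof -
  have lin: "linear T"
    using T by (rule bounded_linear.linear)
  have inj: "inj T" and surj: "surj T"
    using \<open>bij T\<close> by (simp_all add: bij_is_inj bij_is_surj)
  obtain c where "c > 0"
    and approx: "\<And>w. \<exists>u. norm u \<le> c * norm w \<and> norm (w - T u) \<le> norm w / 2"
    using approximate_preimage_bound[OF lin surj] by blast
  have bound: "norm (inv T w) \<le> norm w * (2 * c)" for w
  proof -
    obtain u where "T u = w" "norm u \<le> 2 * c * norm w"
      using exact_preimage_from_approximate[OF T less_imp_le[OF \<open>c > 0\<close>] approx] .
    moreover have "inv T w = u"
      using inv_f_eq[OF inj] \<open>T u = w\<close> by blast
    ultimately show ?thesis
      by (simp add: mult.commute)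
  qed
  have right_inverse: "T (inv T w) = w" for w
    using surj by (simp add: surj_f_inv_f)
  show ?thesis
  proof (rule bounded_linear_intro[OF _ _ bound])
    show "inv T (a + b) = inv T a + inv T b" for a b
      by (rule inv_f_eq[OF inj]) (simp add: linear_add[OF lin] right_inverse)
    show "inv T (s *\<^sub>R a) = s *\<^sub>R inv T a" for s a
      by (rule inv_f_eq[OF inj]) (simp add: linear_scale[OF lin] right_inverse)
  qed
qed

section \<open>Riesz bases and stable phase retrieval\<close>

text \<open>The coefficients \<open>y \<bullet> x\<^sub>j\<close> are the coordinates of \<open>T\<^sup>* y\<close> in the basis \<open>(e\<^sub>j)\<close>, and
  \<open>\<parallel>y\<parallel>\<^sup>2 = \<langle>T\<^sup>* y, T\<^sup>-\<^sup>1 y\<rangle>\<close>.\<close>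
lemma riesz_basis_lower_frame_bound:
  fixes xs :: "nat \<Rightarrow> 'a::{real_inner,complete_space}"
  assumes "riesz_basis xs"
  obtains K where "K > 0" "\<And>y. summable (\<lambda>j. (y \<bullet> xs j)\<^sup>2)"
    "\<And>y. norm y \<le> K * sqrt (\<Sum>j. (y \<bullet> xs j)\<^sup>2)"
proof -
  obtain e :: "nat \<Rightarrow> 'a" and T where e: "orthonormal_basis e" and T: "bounded_linear T"
    and "bij T" and Te: "\<And>j. T (e j) = xs j"
    using assms unfolding riesz_basis_def by blast
  obtain KS where "KS > 0" and KS: "\<And>w. norm (inv T w) \<le> norm w * KS"
    using bounded_linear.pos_bounded[OF bounded_linear_inv[OF T \<open>bij T\<close>]] by blast
  obtain KT where KT: "\<And>w. norm (T w) \<le> norm w * KT"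
    using bounded_linear.pos_bounded[OF T] by blast
  obtain A where A: "\<And>v w. A v \<bullet> w = v \<bullet> T w"
    using bounded_adjoint_exists[OF e T, of KT] KT by (metis mult.commute)
  have "(\<lambda>j. (y \<bullet> xs j)\<^sup>2) sums (norm (A y))\<^sup>2" for y
    using parseval[OF e, of "A y"] by (simp add: A Te)
  then have summable: "summable (\<lambda>j. (y \<bullet> xs j)\<^sup>2)"
    and norm_A: "sqrt (\<Sum>j. (y \<bullet> xs j)\<^sup>2) = norm (A y)" for y
    by (simp_all add: sums_iff)
  have "norm y \<le> KS * sqrt (\<Sum>j. (y \<bullet> xs j)\<^sup>2)" for y
  proof -
    have "(norm y)\<^sup>2 = A y \<bullet> inv T y"
      using \<open>bij T\<close> by (simp add: A bij_is_surj surj_f_inv_f power2_norm_eq_inner)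
    also have "\<dots> \<le> norm (A y) * (norm y * KS)"
      using norm_cauchy_schwarz KS by (meson mult_left_mono norm_ge_zero order_trans)
    finally have "norm y * norm y \<le> (KS * norm (A y)) * norm y"
      by (simp add: power2_eq_square algebra_simps)
    then have "norm y \<le> KS * norm (A y)"
      using \<open>KS > 0\<close> by (cases "norm y = 0") auto
    then show ?thesis
      by (simp add: norm_A)
  qed
  with \<open>KS > 0\<close> summable show thesis
    using that by blast
qed

text \<open>The biorthogonal sequence is \<open>z\<^sub>j = (T\<^sup>-\<^sup>1)\<^sup>* e\<^sub>j\<close>.\<close>
lemma riesz_basis_bounded_biorthogonal:
  fixes xs :: "nat \<Rightarrow> 'a::{real_inner,complete_space}"
  assumes "riesz_basis xs"
  obtains z K where "\<And>j. norm (z j) \<le> K" "\<And>i j. z j \<bullet> xs i = (if j = i then 1 else 0)"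
proof -
  obtain e :: "nat \<Rightarrow> 'a" and T where e: "orthonormal_basis e" and T: "bounded_linear T"
    and "bij T" and Te: "\<And>j. T (e j) = xs j"
    using assms unfolding riesz_basis_def by blast
  have S: "bounded_linear (inv T)"
    by (rule bounded_linear_inv[OF T \<open>bij T\<close>])
  obtain KS where KS: "\<And>w. norm (inv T w) \<le> norm w * KS"
    using bounded_linear.pos_bounded[OF S] by blast
  obtain A where A: "\<And>v w. A v \<bullet> w = v \<bullet> inv T w" "\<And>v. norm (A v) \<le> KS * norm v"
    using bounded_adjoint_exists[OF e S, of KS] KS by (metis mult.commute)
  have unit: "norm (e j) = 1" and "e j \<bullet> e i = (if j = i then 1 else 0)" for i j
    using e by (simp_all add: orthonormal_basis_iff orthonormal_seqD norm_eq_sqrt_inner)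
  moreover have "inv T (xs i) = e i" for i
    using \<open>bij T\<close> by (simp add: Te[symmetric] bij_is_inj)
  ultimately have "A (e j) \<bullet> xs i = (if j = i then 1 else 0)" for i j
    by (simp add: A(1))
  moreover have "norm (A (e j)) \<le> KS" for j
    using A(2)[of "e j"] unit by simp
  ultimately show thesis
    using that[of "\<lambda>j. A (e j)" KS] by blast
qed

lemma abs_diff_abs_squared_same_sign:
  fixes a b :: real
  assumes "a * b \<ge> 0"
  shows "(\<bar>a\<bar> - \<bar>b\<bar>)\<^sup>2 = (a - b)\<^sup>2"
proof -
  have "\<bar>a\<bar> - \<bar>b\<bar> = a - b \<or> \<bar>a\<bar> - \<bar>b\<bar> = - (a - b)"
    using assms by (auto simp: abs_if zero_le_mult_iff)
  then show ?thesis
    by (metis power2_minus)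
qed

lemma abs_analysis_dist_same_signs:
  assumes "\<And>j. (x \<bullet> xs j) * (y \<bullet> xs j) \<ge> 0"
  shows "abs_analysis_dist xs x y = sqrt (\<Sum>j. ((x - y) \<bullet> xs j)\<^sup>2)"
  unfolding abs_analysis_dist_def
  by (simp add: abs_diff_abs_squared_same_sign[OF assms] inner_diff_left)

lemma C_stable_pr_near_if_finite_support:
  fixes xs :: "nat \<Rightarrow> 'a::real_inner"
  assumes lower: "\<And>y. norm y \<le> K * sqrt (\<Sum>j. (y \<bullet> xs j)\<^sup>2)"
    and fin: "finite {j. x \<bullet> xs j \<noteq> 0}"
  shows "C_stable_pr_near K xs x"
proof -
  let ?F = "at x within - {x, - x}"
  have "eventually (\<lambda>y. (x \<bullet> xs j) * (y \<bullet> xs j) > 0) ?F" if "x \<bullet> xs j \<noteq> 0" for j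
  proof (rule order_tendstoD)
    show "((\<lambda>y. (x \<bullet> xs j) * (y \<bullet> xs j)) \<longlongrightarrow> (x \<bullet> xs j) * (x \<bullet> xs j)) ?F"
      by (intro tendsto_intros)
    show "0 < (x \<bullet> xs j) * (x \<bullet> xs j)"
      using that by (auto simp: zero_less_mult_iff linorder_neq_iff)
  qed
  then have "eventually (\<lambda>y. \<forall>j\<in>{j. x \<bullet> xs j \<noteq> 0}. (x \<bullet> xs j) * (y \<bullet> xs j) > 0) ?F"
    by (intro eventually_ball_finite[OF fin]) simp
  moreover have "eventually (\<lambda>y. y \<noteq> x \<and> y \<noteq> - x) ?F"
    by (auto simp: eventually_at_filter)
  ultimately have "eventually (\<lambda>y. 1 \<le> K * Psi xs x y) ?F"
  proof eventually_elim
    case (elim y)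
    then have "(x \<bullet> xs j) * (y \<bullet> xs j) \<ge> 0" for j
      by (cases "x \<bullet> xs j = 0") (auto intro: less_imp_le)
    then have "min (norm (x - y)) (norm (x + y)) \<le> K * abs_analysis_dist xs x y"
      using lower[of "x - y"] by (simp add: abs_analysis_dist_same_signs min.coboundedI1)
    moreover have "min (norm (x - y)) (norm (x + y)) > 0"
      using elim by (auto simp: add_eq_0_iff)
    ultimately show ?case
      by (simp add: Psi_def le_divide_eq)
  qed
  then show ?thesis
    unfolding C_stable_pr_near_def
    by (intro Liminf_bounded) (auto elim!: eventually_mono simp: one_ereal_def)
qed

lemma Psi_reflect_coefficient:
  assumes "\<And>i. z \<bullet> xs i = (if i = j then 1 else 0)"
  shows "Psi xs x (x - (2 * (x \<bullet> xs j)) *\<^sub>R z) = 0"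
proof -
  have "\<bar>(x - (2 * (x \<bullet> xs j)) *\<^sub>R z) \<bullet> xs i\<bar> = \<bar>x \<bullet> xs i\<bar>" for i
    using assms[of i] by (simp add: inner_diff_left)
  then show ?thesis
    by (simp add: Psi_def abs_analysis_dist_def)
qed

lemma stable_pr_near_Psi_nonzero:
  assumes "stable_pr_near xs x"
  obtains d where "d > 0" "\<And>y. y \<noteq> x \<Longrightarrow> y \<noteq> - x \<Longrightarrow> dist y x < d \<Longrightarrow> Psi xs x y \<noteq> 0"
proof -
  obtain C where "C_stable_pr_near C xs x"
    using assms unfolding stable_pr_near_def by blast
  then have "\<forall>c<1. eventually (\<lambda>y. c < ereal (C * Psi xs x y)) (at x within - {x, - x})"
    unfolding C_stable_pr_near_def le_Liminf_iff .
  then have "eventually (\<lambda>y. 0 < ereal (C * Psi xs x y)) (at x within - {x, - x})"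
    by (rule allE[where x=0]) simp
  then obtain d where "d > 0"
    and d: "\<forall>y\<in>- {x, - x}. y \<noteq> x \<and> dist y x < d \<longrightarrow> 0 < ereal (C * Psi xs x y)"
    unfolding eventually_at by blast
  have "Psi xs x y \<noteq> 0" if "y \<noteq> x" "y \<noteq> - x" "dist y x < d" for y
    using d that by fastforce
  with \<open>d > 0\<close> show thesis
    using that by blast
qed

lemma finite_support_if_stable_pr_near:
  fixes xs :: "nat \<Rightarrow> 'a::real_inner"
  assumes summable: "summable (\<lambda>j. (x \<bullet> xs j)\<^sup>2)"
    and bounded: "\<And>j. norm (z j) \<le> K"
    and biorthogonal: "\<And>i j. z j \<bullet> xs i = (if j = i then 1 else 0)"
    and "stable_pr_near xs x"
  shows "finite {j. x \<bullet> xs j \<noteq> 0}"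
proof (rule ccontr)
  assume infinite: "infinite {j. x \<bullet> xs j \<noteq> 0}"
  obtain d where "d > 0"
    and d: "\<And>y. y \<noteq> x \<Longrightarrow> y \<noteq> - x \<Longrightarrow> dist y x < d \<Longrightarrow> Psi xs x y \<noteq> 0"
    using stable_pr_near_Psi_nonzero[OF \<open>stable_pr_near xs x\<close>] by blast
  have "(\<lambda>j. \<bar>x \<bullet> xs j\<bar>) \<longlonglongrightarrow> 0"
    using tendsto_real_sqrt[OF summable_LIMSEQ_zero[OF summable]] by simp
  then have "(\<lambda>j. 2 * \<bar>x \<bullet> xs j\<bar> * K) \<longlonglongrightarrow> 2 * 0 * K"
    by (intro tendsto_intros)
  then have "eventually (\<lambda>j. 2 * \<bar>x \<bullet> xs j\<bar> * K < d) sequentially"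
    using \<open>d > 0\<close> by (simp add: order_tendstoD(2))
  then obtain N where N: "\<And>j. j \<ge> N \<Longrightarrow> 2 * \<bar>x \<bullet> xs j\<bar> * K < d"
    unfolding eventually_sequentially by blast
  obtain j where "j \<ge> N" "x \<bullet> xs j \<noteq> 0"
    using infinite unfolding infinite_nat_iff_unbounded_le by blast
  have "infinite ({j. x \<bullet> xs j \<noteq> 0} - {j})"
    using infinite by simp
  then obtain i where "i \<noteq> j" "x \<bullet> xs i \<noteq> 0"
    using infinite_imp_nonempty by blast
  define y where "y = x - (2 * (x \<bullet> xs j)) *\<^sub>R z j"
  have "y \<bullet> xs j = - (x \<bullet> xs j)" "y \<bullet> xs i = x \<bullet> xs i"
    using biorthogonal[of j j] biorthogonal[of j i] \<open>i \<noteq> j\<close> by (simp_all add: y_def inner_diff_left)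
  then have "y \<noteq> x" "y \<noteq> - x"
    using \<open>x \<bullet> xs j \<noteq> 0\<close> \<open>x \<bullet> xs i \<noteq> 0\<close> by auto
  moreover have "dist y x = 2 * \<bar>x \<bullet> xs j\<bar> * norm (z j)"
    by (simp add: y_def dist_norm abs_mult)
  then have "dist y x < d"
    using N[OF \<open>j \<ge> N\<close>] bounded[of j] mult_left_mono[of "norm (z j)" K "2 * \<bar>x \<bullet> xs j\<bar>"]
    by simp
  ultimately have "Psi xs x y \<noteq> 0"
    by (rule d)
  moreover have "Psi xs x y = 0"
    unfolding y_def by (rule Psi_reflect_coefficient) (use biorthogonal in simp)
  ultimately show False
    by contradiction
qed

theorem proposition5p1:
  fixes xs :: "nat \<Rightarrow> 'a::{real_inner,complete_space}" and x :: 'a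
  assumes "infinite_dimensional TYPE('a)"
    and "riesz_basis xs"
  shows "stable_pr_near xs x \<longleftrightarrow> finite {j. x \<bullet> xs j \<noteq> 0}"
proof
  obtain K where "K > 0" and summable: "\<And>y. summable (\<lambda>j. (y \<bullet> xs j)\<^sup>2)"
    and lower: "\<And>y. norm y \<le> K * sqrt (\<Sum>j. (y \<bullet> xs j)\<^sup>2)"
    using riesz_basis_lower_frame_bound[OF assms(2)] by blast
  obtain z K' where bounded: "\<And>j. norm (z j) \<le> K'"
    and biorthogonal: "\<And>i j. z j \<bullet> xs i = (if j = i then 1 else 0)"
    using riesz_basis_bounded_biorthogonal[OF assms(2)] by blast
  show "finite {j. x \<bullet> xs j \<noteq> 0}" if "stable_pr_near xs x"
    using finite_support_if_stable_pr_near[OF summable bounded biorthogonal that] .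
  show "stable_pr_near xs x" if "finite {j. x \<bullet> xs j \<noteq> 0}"
    using C_stable_pr_near_if_finite_support[OF lower that] \<open>K > 0\<close>
    unfolding stable_pr_near_def by blast
qed

end
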